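(* Let $n\ge1$ and $\sigma_n=1+2+\dots+2^{n-1}$. The function $\Phi_n(x,y,a)=a^{\sigma_n}\,\phi_{a,-}\big(f_a^{-n}(x,y)\big)$, defined for $0<|a|<R$ and $(x,y)\in f_a^{n}(V_-)$, extends to a holomorphic function on the open set $$\mathcal D_{-,n}=\{(x,y,a): 0<|a|<R,\ (x,y)\in f_a^n(V_-)\}\cup\{(x,y,0): p(y)\ne x\},$$ and its value at $a=0$ is $\Phi_n(x,y,0)=(p(y)-x)^{2^{n-1}}$.
   Context: Let $c\in\mathbb C$, $p(x)=x^2+c$, $f_a(x,y)=(p(x)-ay,\,x)$ with $f_a^{-1}(x,y)=(y,(p(y)-x)/a)$ for $a\ne0$. Fix $R>0$, $0<\rho<1$, $\alpha>0$ such that for all $|y|\ge\alpha$: $\frac{|c|}{|y|^2}+\frac{R+1}{|y|}<\rho$ and $|p(y)|>(2R+1)|y|$. $V_-=\{|y|>|x|,\ |y|>\alpha\}$. For $(x,y)\in V_-$, $0<|a|<R$, with $(x_{-k},y_{-k})=f_a^{-k}(x,y)$, $y_0=y$: $\phi_{a,-}(x,y)=y\exp\big(\sum_{k\ge1}2^{-k}\log\frac{a y_{-k}}{y_{-(k-1)}^2}\big)$ (principal branch), a holomorphic function. *)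

theory Defs
  imports "HOL-Analysis.Analysis"
begin

definition pq :: "complex \<Rightarrow> complex \<Rightarrow> complex" where
  "pq c x = x^2 + c"

definition henon :: "complex \<Rightarrow> complex \<Rightarrow> complex \<times> complex \<Rightarrow> complex \<times> complex" where
  "henon c a = (\<lambda>(x,y). (pq c x - a * y, x))"

definition henon_inv :: "complex \<Rightarrow> complex \<Rightarrow> complex \<times> complex \<Rightarrow> complex \<times> complex" where
  "henon_inv c a = (\<lambda>(x,y). (y, (pq c y - x) / a))"

definition Vminus :: "real \<Rightarrow> (complex \<times> complex) set" where
  "Vminus \<alpha> = {(x,y). cmod y > cmod x \<and> cmod y > \<alpha>}"

definition yback :: "complex \<Rightarrow> complex \<Rightarrow> complex \<times> complex \<Rightarrow> nat \<Rightarrow> complex" where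
  "yback c a z k = snd ((henon_inv c a ^^ k) z)"

definition phi_minus :: "complex \<Rightarrow> complex \<Rightarrow> complex \<times> complex \<Rightarrow> complex" where
  "phi_minus c a z = snd z * exp (\<Sum>k. (1/2) ^ (Suc k) *
      Ln (a * yback c a z (Suc k) / (yback c a z k)^2))"

definition cscale3 :: "complex \<Rightarrow> complex \<times> complex \<times> complex \<Rightarrow> complex \<times> complex \<times> complex" where
  "cscale3 w = (\<lambda>(x,y,a). (w*x, w*y, w*a))"

definition holomorphic3_on :: "(complex \<times> complex \<times> complex \<Rightarrow> complex) \<Rightarrow> (complex \<times> complex \<times> complex) set \<Rightarrow> bool" where
  "holomorphic3_on F S \<longleftrightarrow> (\<forall>z\<in>S. \<exists>L. (F has_derivative L) (at z) \<and> (\<forall>w v. L (cscale3 w v) = w * L v))"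

definition Dminus :: "complex \<Rightarrow> real \<Rightarrow> real \<Rightarrow> nat \<Rightarrow> (complex \<times> complex \<times> complex) set" where
  "Dminus c R \<alpha> n =
     {(x,y,a). 0 < cmod a \<and> cmod a < R \<and> (x,y) \<in> (henon c a ^^ n) ` Vminus \<alpha>}
     \<union> {(x,y,a). a = 0 \<and> pq c y \<noteq> x}"

end

theory Submission
  imports Defs "HOL-Complex_Analysis.Cauchy_Integral_Formula"
begin

text \<open>
  Write P, Q for the scaled backward orbit: for a \<noteq> 0 the polynomial map
  (x,y,a) \<mapsto> (a^tau_n x_{-n}, a^sigma_n y_{-n}), which at a = 0 gives Q = (p(y) - x)^(2^(n-1)).
  In the "escape coordinates" u = 1/y, r = x/y the inverse Henon map becomes the rational map
  (u,r) \<mapsto> (a u^2/W, a u/W) with W = 1 + c u^2 - u r, and the k-th term of the series defining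
  phi_{a,-} is 2^{-k-1} Ln W along this orbit.  Hence
    Phi_n(x,y,a) = Q \<cdot> exp(sum_k 2^{-k-1} Ln W_k)  evaluated at  (u,r,a) = (a^sigma_n/Q, a^{2^(n-1)} P/Q, a),
  an expression that makes sense also for a = 0, where it equals Q.
\<close>

definition complex_linear3 :: "(complex \<times> complex \<times> complex \<Rightarrow> complex) \<Rightarrow> bool" where
  "complex_linear3 L \<longleftrightarrow> (\<forall>w v. L (cscale3 w v) = w * L v)"

lemma holomorphic3_on_iff:
  "holomorphic3_on F S \<longleftrightarrow> (\<forall>z\<in>S. \<exists>L. (F has_derivative L) (at z) \<and> complex_linear3 L)"
  unfolding holomorphic3_on_def complex_linear3_def by simp

lemma cscale3_simps [simp]:
  "fst (cscale3 w v) = w * fst v" "fst (snd (cscale3 w v)) = w * fst (snd v)"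
  "snd (snd (cscale3 w v)) = w * snd (snd v)"
  unfolding cscale3_def by (auto split: prod.splits)

lemma cscale3_zero [simp]: "cscale3 0 v = 0"
  unfolding cscale3_def by (simp add: zero_prod_def split: prod.splits)

lemma norm_cscale3: "norm (cscale3 w v) = cmod w * norm v"
proof -
  obtain x y z where v: "v = (x, y, z)" by (cases v)
  have "norm (cscale3 w v) = sqrt ((cmod w)\<^sup>2 * ((cmod x)\<^sup>2 + ((cmod y)\<^sup>2 + (cmod z)\<^sup>2)))"
    by (simp add: v cscale3_def norm_prod_def norm_mult power_mult_distrib algebra_simps)
  also have "\<dots> = cmod w * norm v"
    by (simp add: v norm_prod_def real_sqrt_mult)
  finally show ?thesis .
qed

lemma has_derivative_line3:
  "((\<lambda>t. p + cscale3 t h) has_derivative (\<lambda>s. cscale3 s h)) (at t)"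
  by (cases h) (auto simp: cscale3_def intro!: derivative_eq_intros)

lemma line_has_field_derivative:
  assumes "(f has_derivative L) (at (p + cscale3 t h))" and "complex_linear3 L"
  shows "((\<lambda>t. f (p + cscale3 t h)) has_field_derivative L h) (at t)"
proof -
  have "((\<lambda>t. f (p + cscale3 t h)) has_derivative (\<lambda>s. L (cscale3 s h))) (at t)"
    using diff_chain_at[OF has_derivative_line3 assms(1)] by (simp add: o_def)
  moreover have "(\<lambda>s. L (cscale3 s h)) = (*) (L h)"
    using assms(2) unfolding complex_linear3_def by (intro ext) (metis mult.commute)
  ultimately show ?thesis by (simp add: has_field_derivative_def)
qed

lemma holomorphic3_on_const: "holomorphic3_on (\<lambda>z. k) S"
  unfolding holomorphic3_on_iff complex_linear3_def by (auto intro!: exI[of _ "\<lambda>h. 0"])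

lemma holomorphic3_on_fst: "holomorphic3_on (\<lambda>z. fst z) S"
  unfolding holomorphic3_on_iff complex_linear3_def
  by (auto intro!: exI[of _ "\<lambda>h. fst h"] derivative_eq_intros)

lemma holomorphic3_on_fst_snd: "holomorphic3_on (\<lambda>z. fst (snd z)) S"
  unfolding holomorphic3_on_iff complex_linear3_def
  by (auto intro!: exI[of _ "\<lambda>h. fst (snd h)"] derivative_eq_intros)

lemma holomorphic3_on_snd_snd: "holomorphic3_on (\<lambda>z. snd (snd z)) S"
  unfolding holomorphic3_on_iff complex_linear3_def
  by (auto intro!: exI[of _ "\<lambda>h. snd (snd h)"] derivative_eq_intros)

lemmas holomorphic3_on_coordinates = holomorphic3_on_fst holomorphic3_on_fst_snd holomorphic3_on_snd_snd

lemma holomorphic3_on_binop: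
  assumes f: "holomorphic3_on f S" and g: "holomorphic3_on g S"
    and rule: "\<And>z L1 L2. (f has_derivative L1) (at z) \<Longrightarrow> (g has_derivative L2) (at z) \<Longrightarrow>
        complex_linear3 L1 \<Longrightarrow> complex_linear3 L2 \<Longrightarrow>
        \<exists>L. ((\<lambda>z. F (f z) (g z)) has_derivative L) (at z) \<and> complex_linear3 L"
  shows "holomorphic3_on (\<lambda>z. F (f z) (g z)) S"
  using f g rule unfolding holomorphic3_on_iff by meson

lemma holomorphic3_on_add:
  "holomorphic3_on f S \<Longrightarrow> holomorphic3_on g S \<Longrightarrow> holomorphic3_on (\<lambda>z. f z + g z) S"
  apply (erule holomorphic3_on_binop, assumption)
  subgoal for z L1 L2
    by (rule exI[of _ "\<lambda>h. L1 h + L2 h"])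
       (auto intro!: derivative_eq_intros simp: distrib_left complex_linear3_def)
  done

lemma holomorphic3_on_diff:
  "holomorphic3_on f S \<Longrightarrow> holomorphic3_on g S \<Longrightarrow> holomorphic3_on (\<lambda>z. f z - g z) S"
  apply (erule holomorphic3_on_binop, assumption)
  subgoal for z L1 L2
    by (rule exI[of _ "\<lambda>h. L1 h - L2 h"])
       (auto intro!: derivative_eq_intros simp: right_diff_distrib complex_linear3_def)
  done

lemma holomorphic3_on_mult:
  "holomorphic3_on f S \<Longrightarrow> holomorphic3_on g S \<Longrightarrow> holomorphic3_on (\<lambda>z. f z * g z) S"
  apply (erule holomorphic3_on_binop, assumption)
  subgoal for z L1 L2
    by (rule exI[of _ "\<lambda>h. f z * L2 h + L1 h * g z"])
       (auto intro!: derivative_eq_intros simp: algebra_simps complex_linear3_def)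
  done

lemma holomorphic3_on_power: "holomorphic3_on f S \<Longrightarrow> holomorphic3_on (\<lambda>z. f z ^ m) S"
  by (induction m) (auto intro: holomorphic3_on_mult holomorphic3_on_const)

lemma holomorphic3_on_compose_field:
  assumes "holomorphic3_on f S" and "\<And>z. z \<in> S \<Longrightarrow> (g has_field_derivative g' z) (at (f z))"
  shows "holomorphic3_on (\<lambda>z. g (f z)) S"
  unfolding holomorphic3_on_iff
proof
  fix z assume z: "z \<in> S"
  then obtain L where L: "(f has_derivative L) (at z)" "complex_linear3 L"
    using assms(1) unfolding holomorphic3_on_iff by blast
  have "((\<lambda>z. g (f z)) has_derivative (\<lambda>h. g' z * L h)) (at z)"
    using diff_chain_at[OF L(1) assms(2)[OF z, unfolded has_field_derivative_def]] by (simp add: o_def)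
  moreover have "complex_linear3 (\<lambda>h. g' z * L h)"
    using L(2) by (simp add: complex_linear3_def algebra_simps)
  ultimately show "\<exists>L. ((\<lambda>z. g (f z)) has_derivative L) (at z) \<and> complex_linear3 L" by blast
qed

lemma holomorphic3_on_exp: "holomorphic3_on f S \<Longrightarrow> holomorphic3_on (\<lambda>z. exp (f z)) S"
  by (rule holomorphic3_on_compose_field[where g'="\<lambda>z. exp (f z)"]) (auto intro: DERIV_exp)

lemma holomorphic3_on_divide:
  assumes "holomorphic3_on f S" "holomorphic3_on g S" "\<And>z. z \<in> S \<Longrightarrow> g z \<noteq> 0"
  shows "holomorphic3_on (\<lambda>z. f z / g z) S"
proof -
  have "holomorphic3_on (\<lambda>z. inverse (g z)) S"
    by (rule holomorphic3_on_compose_field[where g'="\<lambda>z. - inverse (g z ^ 2)", OF assms(2)])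
       (use assms(3) in \<open>auto intro!: derivative_eq_intros simp: power2_eq_square\<close>)
  then show ?thesis unfolding divide_inverse by (intro holomorphic3_on_mult assms(1))
qed

lemma holomorphic3_on_compose3:
  assumes H: "holomorphic3_on H T" and f1: "holomorphic3_on f1 S" and f2: "holomorphic3_on f2 S"
    and f3: "holomorphic3_on f3 S" and into: "\<And>z. z \<in> S \<Longrightarrow> (f1 z, f2 z, f3 z) \<in> T"
  shows "holomorphic3_on (\<lambda>z. H (f1 z, f2 z, f3 z)) S"
  unfolding holomorphic3_on_iff
proof
  fix z assume z: "z \<in> S"
  obtain L1 L2 L3 where L: "(f1 has_derivative L1) (at z)" "(f2 has_derivative L2) (at z)"
      "(f3 has_derivative L3) (at z)" "complex_linear3 L1" "complex_linear3 L2" "complex_linear3 L3"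
    using f1 f2 f3 z unfolding holomorphic3_on_iff by meson
  obtain LH where LH: "(H has_derivative LH) (at (f1 z, f2 z, f3 z))" "complex_linear3 LH"
    using H into[OF z] unfolding holomorphic3_on_iff by blast
  have "((\<lambda>z. H (f1 z, f2 z, f3 z)) has_derivative (\<lambda>h. LH (L1 h, L2 h, L3 h))) (at z)"
    using diff_chain_at[OF has_derivative_Pair[OF L(1) has_derivative_Pair[OF L(2,3)]] LH(1)]
    by (simp add: o_def)
  moreover have "complex_linear3 (\<lambda>h. LH (L1 h, L2 h, L3 h))"
    using L(4-6) LH(2) unfolding complex_linear3_def by (metis cscale3_def case_prod_conv)
  ultimately show "\<exists>L. ((\<lambda>z. H (f1 z, f2 z, f3 z)) has_derivative L) (at z) \<and> complex_linear3 L"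
    by blast
qed

lemma holomorphic3_on_subset: "holomorphic3_on F S \<Longrightarrow> T \<subseteq> S \<Longrightarrow> holomorphic3_on F T"
  unfolding holomorphic3_on_def by blast

lemma holomorphic3_on_imp_isCont: "holomorphic3_on F S \<Longrightarrow> z \<in> S \<Longrightarrow> isCont F z"
  unfolding holomorphic3_on_def using has_derivative_continuous by blast

text \<open>Proof: apply the one-variable Cauchy
  inequality to f restricted to the complex line through p in direction h.\<close>

lemma holomorphic3_derivative_bound:
  assumes hol: "holomorphic3_on f S" and r: "r > 0" and sub: "cball p r \<subseteq> S"
    and bound: "\<And>z. z \<in> S \<Longrightarrow> cmod (f z) \<le> M"
    and L: "(f has_derivative L) (at p)" "complex_linear3 L"
  shows "cmod (L h) \<le> M / r * norm h"
proof (cases "h = 0")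
  case True
  then have "cscale3 0 h = h" by simp
  then have "L h = 0 * L h" using L(2) unfolding complex_linear3_def by metis
  then show ?thesis using True by simp
next
  case False
  define \<delta> where "\<delta> = r / norm h"
  have \<delta>: "\<delta> > 0" using r False by (simp add: \<delta>_def)
  define g where "g t = f (p + cscale3 t h)" for t
  have line_in: "p + cscale3 t h \<in> S" if "t \<in> cball 0 \<delta>" for t
  proof -
    have "norm (cscale3 t h) \<le> r"
      using that False by (simp add: norm_cscale3 \<delta>_def field_simps)
    then show ?thesis using sub by (auto simp: dist_norm)
  qed
  have g_deriv: "\<exists>D. (g has_field_derivative D) (at t)" if "t \<in> cball 0 \<delta>" for t
    using hol line_in[OF that] unfolding holomorphic3_on_iff g_def
    by (blast intro: line_has_field_derivative)
  have "g holomorphic_on ball 0 \<delta>"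
    unfolding holomorphic_on_def field_differentiable_def
  proof
    fix t :: complex assume "t \<in> ball 0 \<delta>"
    then obtain D where "(g has_field_derivative D) (at t)" using g_deriv by force
    then show "\<exists>D. (g has_field_derivative D) (at t within ball 0 \<delta>)"
      by (blast intro: has_field_derivative_at_within)
  qed
  moreover have "continuous_on (cball 0 \<delta>) g"
    using g_deriv by (metis DERIV_isCont continuous_at_imp_continuous_on)
  moreover have "cmod (g t) \<le> M" if "norm (0 - t) = \<delta>" for t
    unfolding g_def using that by (intro bound line_in) auto
  ultimately have "norm ((deriv ^^ 1) g 0) \<le> fact 1 * M / \<delta> ^ 1"
    by (rule Cauchy_inequality[OF _ _ \<delta>])
  moreover have "deriv g 0 = L h"
    using line_has_field_derivative[of f L p 0 h] L unfolding g_def by (simp add: DERIV_imp_deriv)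
  ultimately show ?thesis using False by (simp add: \<delta>_def field_simps)
qed

text \<open>A series of linear maps dominated termwise by a summable sequence of operator
  bounds converges uniformly in operator norm; this is the hypothesis of the library's
  theorem on differentiating series termwise.\<close>

lemma uniform_convergence_derivative_series:
  fixes f' :: "nat \<Rightarrow> 'a \<Rightarrow> 'b::real_normed_vector \<Rightarrow> 'c::banach"
  assumes bound: "\<And>k p h. p \<in> T \<Longrightarrow> norm (f' k p h) \<le> C k * norm h"
    and C: "summable C" and e: "e > 0"
  shows "\<forall>\<^sub>F n in sequentially. \<forall>p\<in>T. \<forall>h. norm (sum (\<lambda>i. f' i p h) {..<n} - (\<Sum>k. f' k p h)) \<le> e * norm h"
proof -
  have C_summable: "summable (\<lambda>k. C k * norm h)" for h
    using C by (rule summable_mult2)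
  have f'_summable: "summable (\<lambda>k. f' k p h)" if "p \<in> T" for p h
    by (rule summable_comparison_test'[OF C_summable[of h], where N=0]) (rule bound[OF that])
  obtain N where N: "\<And>n. n \<ge> N \<Longrightarrow> norm (\<Sum>i. C (i + n)) < e"
    using suminf_exist_split[OF e C] by blast
  have "norm (sum (\<lambda>i. f' i p h) {..<n} - (\<Sum>k. f' k p h)) \<le> e * norm h"
    if "n \<ge> N" "p \<in> T" for n p h
  proof -
    have "norm (sum (\<lambda>i. f' i p h) {..<n} - (\<Sum>k. f' k p h)) = norm (\<Sum>i. f' (i + n) p h)"
      using suminf_minus_initial_segment[OF f'_summable[OF \<open>p \<in> T\<close>, of h], of n]
      by (simp add: norm_minus_commute)
    also have "\<dots> \<le> (\<Sum>i. C (i + n) * norm h)"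
      using bound[OF \<open>p \<in> T\<close>] summable_ignore_initial_segment[OF C_summable[of h]]
      by (intro norm_suminf_le) auto
    also have "\<dots> = (\<Sum>i. C (i + n)) * norm h"
      using summable_ignore_initial_segment[OF C] by (rule suminf_mult2[symmetric])
    also have "\<dots> \<le> e * norm h"
      using N[OF \<open>n \<ge> N\<close>] by (intro mult_right_mono) auto
    finally show ?thesis .
  qed
  then show ?thesis unfolding eventually_sequentially by blast
qed

lemma has_derivative_suminf3:
  assumes T: "open T" "convex T" "q \<in> T"
    and f': "\<And>k p. p \<in> T \<Longrightarrow> (f k has_derivative f' k p) (at p) \<and> complex_linear3 (f' k p)"
    and f'_bound: "\<And>k p h. p \<in> T \<Longrightarrow> cmod (f' k p h) \<le> C k * norm h" and C: "summable C"
    and f_summable: "summable (\<lambda>k. f k q)"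
  shows "\<exists>L. ((\<lambda>z. \<Sum>k. f k z) has_derivative L) (at q) \<and> complex_linear3 L"
proof -
  define g' where "g' p h = (\<Sum>k. f' k p h)" for p h
  have f'_summable: "summable (\<lambda>k. f' k q h)" for h
    by (rule summable_comparison_test'[OF summable_mult2[OF C], where N=0]) (rule f'_bound[OF T(3)])
  have deriv_within: "(f k has_derivative f' k p) (at p within T)" if "p \<in> T" for k p
    using f'[OF that] by (blast intro: has_derivative_at_withinI)
  have uniform: "\<forall>\<^sub>F n in sequentially. \<forall>p\<in>T. \<forall>h. norm (sum (\<lambda>i. f' i p h) {..<n} - g' p h) \<le> e * norm h"
    if "e > 0" for e
    unfolding g'_def by (rule uniform_convergence_derivative_series[OF f'_bound C that])
  obtain g where g: "\<forall>p\<in>T. (\<lambda>k. f k p) sums g p \<and> (g has_derivative g' p) (at p within T)"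
    using has_derivative_series[OF T(2) deriv_within uniform T(3) summable_sums[OF f_summable]] by blast
  have "(g has_derivative g' q) (at q)"
    using g T(3) at_within_open[OF T(3,1)] by metis
  then have "((\<lambda>z. \<Sum>k. f k z) has_derivative g' q) (at q)"
    by (rule has_derivative_transform_within_open[OF _ T(1,3)]) (use g in \<open>auto simp: sums_iff\<close>)
  moreover have "complex_linear3 (g' q)"
    using f'[OF T(3)] suminf_mult[OF f'_summable] by (simp add: complex_linear3_def g'_def)
  ultimately show ?thesis by blast
qed

text \<open>The Cauchy estimate on a ball of
  radius r around each point dominates the derivative series by sum_k B_k/r, so the
  derivatives may be summed termwise.\<close>

lemma holomorphic3_on_suminf:
  assumes S: "open S" and hol: "\<And>k. holomorphic3_on (f k) S"
    and bound: "\<And>k z. z \<in> S \<Longrightarrow> cmod (f k z) \<le> B k" and B: "summable B"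
  shows "holomorphic3_on (\<lambda>z. \<Sum>k. f k z) S"
  unfolding holomorphic3_on_iff
proof
  fix q assume q: "q \<in> S"
  obtain \<epsilon> where "\<epsilon> > 0" "cball q \<epsilon> \<subseteq> S"
    using S q unfolding open_contains_cball by blast
  then obtain r where r: "r > 0" "cball q (2 * r) \<subseteq> S"
    by (intro that[of "\<epsilon> / 2"]) auto
  have cball_sub: "cball p r \<subseteq> S" if "p \<in> ball q r" for p
  proof
    fix z assume "z \<in> cball p r"
    then have "dist q z \<le> 2 * r" using that dist_triangle[of q z p] by auto
    then show "z \<in> S" using r(2) by auto
  qed
  define f' where "f' k p = (SOME L. (f k has_derivative L) (at p) \<and> complex_linear3 L)" for k p
  have f': "(f k has_derivative f' k p) (at p) \<and> complex_linear3 (f' k p)" if "p \<in> ball q r" for k p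
  proof -
    have "p \<in> S" using cball_sub[OF that] r(1) by auto
    then have "\<exists>L. (f k has_derivative L) (at p) \<and> complex_linear3 L"
      using hol unfolding holomorphic3_on_iff by blast
    then show ?thesis unfolding f'_def by (rule someI_ex)
  qed
  have f'_bound: "cmod (f' k p h) \<le> B k / r * norm h" if "p \<in> ball q r" for k p h
    using f'[OF that] by (intro holomorphic3_derivative_bound[OF hol r(1) cball_sub[OF that] bound]) auto
  have f_summable: "summable (\<lambda>k. f k q)"
    using bound[OF q] by (intro summable_comparison_test[OF _ B]) auto
  have "q \<in> ball q r" using r(1) by simp
  then show "\<exists>L. ((\<lambda>z. \<Sum>k. f k z) has_derivative L) (at q) \<and> complex_linear3 L"
    by (rule has_derivative_suminf3[OF open_ball convex_ball _ f' f'_bound summable_divide[OF B] f_summable])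
qed

text \<open>The exponents sigma_m = 1 + 2 + ... + 2^(m-1) and tau_m = 2^(m-1) - 1; the scaled orbit
  below has first coordinate a^tau_m x_{-m} and second coordinate a^sigma_m y_{-m}.\<close>

definition sigma_exp :: "nat \<Rightarrow> nat" where "sigma_exp m = (\<Sum>k<m. 2^k)"
definition tau_exp :: "nat \<Rightarrow> nat" where "tau_exp m = 2^(m-1) - 1"

lemma sigma_exp_plus_one: "sigma_exp m + 1 = 2^m"
  unfolding sigma_exp_def by (induction m) auto

lemma sigma_exp_Suc: "sigma_exp (Suc m) = 2 * sigma_exp m + 1"
  using sigma_exp_plus_one[of m] sigma_exp_plus_one[of "Suc m"] by simp

lemma tau_exp_Suc: "tau_exp (Suc m) = sigma_exp m"
  using sigma_exp_plus_one[of m] unfolding tau_exp_def by simp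

lemma tau_exp_le: "tau_exp m \<le> 2 * sigma_exp m"
  using sigma_exp_plus_one[of m] unfolding tau_exp_def by (cases m) auto

lemma sigma_exp_split: "m \<ge> 1 \<Longrightarrow> 2^(m-1) + tau_exp m = sigma_exp m"
  using sigma_exp_plus_one[of m] unfolding tau_exp_def by (cases m) auto

lemma sigma_exp_pos: "m \<ge> 1 \<Longrightarrow> sigma_exp m \<ge> 1"
  using sigma_exp_plus_one[of m] one_less_power[of "2::nat" m] by simp

lemma eps_exp_pos: "m \<ge> 1 \<Longrightarrow> 2 * sigma_exp m - tau_exp m \<ge> 1"
  using sigma_exp_split[of m] sigma_exp_pos[of m] by simp

text \<open>The scaled backward orbit (a^tau_m x_{-m}, a^sigma_m y_{-m}), written as a polynomial map
  of (x,y,a): multiplying the recursion y_{-(m+1)} = (p(y_{-m}) - x_{-m})/a by a^sigma_(m+1)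
  clears all denominators.\<close>

fun scaled_orbit :: "complex \<Rightarrow> complex \<times> complex \<times> complex \<Rightarrow> nat \<Rightarrow> complex \<times> complex" where
  "scaled_orbit c z 0 = (fst z, fst (snd z))"
| "scaled_orbit c z (Suc m) =
     (snd (scaled_orbit c z m),
      snd (scaled_orbit c z m) ^ 2 + c * snd (snd z) ^ (2 * sigma_exp m)
        - fst (scaled_orbit c z m) * snd (snd z) ^ (2 * sigma_exp m - tau_exp m))"

lemma scaled_orbit_eq:
  assumes "a \<noteq> 0"
  shows "scaled_orbit c (x, y, a) m =
    (a ^ tau_exp m * fst ((henon_inv c a ^^ m) (x, y)), a ^ sigma_exp m * snd ((henon_inv c a ^^ m) (x, y)))"
proof (induction m)
  case 0
  then show ?case by (simp add: tau_exp_def sigma_exp_def)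
next
  case (Suc m)
  obtain X Y where XY: "(henon_inv c a ^^ m) (x, y) = (X, Y)" by fastforce
  have split: "a ^ tau_exp m * a ^ (2 * sigma_exp m - tau_exp m) = a ^ (2 * sigma_exp m)"
    using tau_exp_le[of m] by (simp flip: power_add)
  have sq: "(a ^ sigma_exp m * Y)^2 = a ^ (2 * sigma_exp m) * Y^2"
    by (simp add: power_mult_distrib power_mult[symmetric] mult.commute)
  have lin: "a ^ tau_exp m * X * a ^ (2 * sigma_exp m - tau_exp m) = a ^ (2 * sigma_exp m) * X"
    using split by (metis mult.assoc mult.commute)
  have new_y: "(a ^ sigma_exp m * Y)^2 + c * a ^ (2 * sigma_exp m)
      - a ^ tau_exp m * X * a ^ (2 * sigma_exp m - tau_exp m) = a ^ sigma_exp (Suc m) * ((pq c Y - X) / a)"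
    using assms unfolding sq lin sigma_exp_Suc pq_def by (simp add: power_add power_mult field_simps)
  have step: "(henon_inv c a ^^ Suc m) (x, y) = (Y, (pq c Y - X) / a)"
    using XY by (simp add: henon_inv_def)
  show ?case
    unfolding step tau_exp_Suc using Suc XY new_y by simp
qed

lemma scaled_orbit_at_zero:
  assumes "m \<ge> 1"
  shows "snd (scaled_orbit c (x, y, 0) m) = (pq c y - x) ^ (2^(m-1))"
  using assms
proof (induction m rule: dec_induct)
  case base
  then show ?case by (simp add: sigma_exp_def tau_exp_def pq_def)
next
  case (step m)
  then have "snd (scaled_orbit c (x, y, 0) (Suc m)) = snd (scaled_orbit c (x, y, 0) m) ^ 2"
    using sigma_exp_pos[of m] eps_exp_pos[of m] by (simp add: zero_power)
  also have "\<dots> = (pq c y - x) ^ (2^(Suc m - 1))"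
    using step by (cases m) (simp_all add: power_mult[symmetric] mult.commute)
  finally show ?case .
qed

lemma holomorphic3_scaled_orbit:
  "holomorphic3_on (\<lambda>z. fst (scaled_orbit c z m)) S \<and> holomorphic3_on (\<lambda>z. snd (scaled_orbit c z m)) S"
  by (induction m)
     (simp_all add: holomorphic3_on_coordinates holomorphic3_on_diff holomorphic3_on_add
        holomorphic3_on_mult holomorphic3_on_power holomorphic3_on_const)

lemma funpow_left_inverse:
  fixes f g :: "'a \<Rightarrow> 'a"
  assumes "\<And>z. g (f z) = z"
  shows "(g ^^ m) ((f ^^ m) z) = z"
proof (induction m arbitrary: z)
  case (Suc m)
  have "(g ^^ Suc m) w = (g ^^ m) (g w)" for w
    by (simp add: funpow_swap1)
  then have "(g ^^ Suc m) ((f ^^ Suc m) z) = (g ^^ m) (g (f ((f ^^ m) z)))"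
    by simp
  then show ?case using assms Suc by simp
qed simp

lemma mem_henon_image_iff:
  assumes "a \<noteq> 0"
  shows "(x, y) \<in> (henon c a ^^ m) ` V \<longleftrightarrow> (henon_inv c a ^^ m) (x, y) \<in> V"
proof -
  have inv1: "henon_inv c a (henon c a z) = z" and inv2: "henon c a (henon_inv c a z) = z" for z
    using assms unfolding henon_def henon_inv_def by (auto split: prod.splits)
  show ?thesis
  proof
    assume "(x, y) \<in> (henon c a ^^ m) ` V"
    then show "(henon_inv c a ^^ m) (x, y) \<in> V"
      using funpow_left_inverse[of "henon_inv c a" "henon c a", OF inv1] by auto
  next
    assume "(henon_inv c a ^^ m) (x, y) \<in> V"
    then show "(x, y) \<in> (henon c a ^^ m) ` V"
      using funpow_left_inverse[of "henon c a" "henon_inv c a", OF inv2, of m "(x, y)"]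
      by (metis rev_image_eqI)
  qed
qed

text \<open>Escape coordinates u = 1/y, r = x/y.  In them f_a^{-1} becomes escape_map, with
  denominator W = escape_den, and the k-th term of the series defining phi_{a,-} is
  2^{-k-1} Ln W along the orbit (escape_orbit) of (u, r) for the parameter a.\<close>

definition escape_den :: "complex \<Rightarrow> complex \<times> complex \<Rightarrow> complex" where
  "escape_den c p = 1 + c * fst p ^ 2 - fst p * snd p"

definition escape_map :: "complex \<Rightarrow> complex \<Rightarrow> complex \<times> complex \<Rightarrow> complex \<times> complex" where
  "escape_map c a p = (a * fst p ^ 2 / escape_den c p, a * fst p / escape_den c p)"

definition escape_orbit :: "complex \<Rightarrow> complex \<times> complex \<times> complex \<Rightarrow> nat \<Rightarrow> complex \<times> complex" where
  "escape_orbit c q k = (escape_map c (snd (snd q)) ^^ k) (fst q, fst (snd q))"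

definition escape_sum :: "complex \<Rightarrow> complex \<times> complex \<times> complex \<Rightarrow> complex" where
  "escape_sum c q = (\<Sum>k. (1/2) ^ Suc k * Ln (escape_den c (escape_orbit c q k)))"

lemma escape_orbit_Suc: "escape_orbit c q (Suc k) = escape_map c (snd (snd q)) (escape_orbit c q k)"
  unfolding escape_orbit_def by simp

lemma escape_orbit_origin: "escape_orbit c (0, 0, a) k = (0, 0)"
  by (induction k) (auto simp: escape_orbit_def escape_map_def)

lemma norm_Ln_one_plus_le:
  fixes z :: complex
  assumes "cmod z < 1"
  shows "cmod (Ln (1 + z)) \<le> cmod z / (1 - cmod z)"
proof -
  have "cmod (Ln (1 + z)) \<le> cmod z + cmod (Ln (1 + z) - z)"
    by (rule norm_triangle_sub)
  also have "\<dots> \<le> cmod z + (cmod z)\<^sup>2 / (1 - cmod z)"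
    using Ln_approx_linear[OF assms] by simp
  also have "\<dots> = cmod z / (1 - cmod z)"
    using assms by (simp add: field_simps power2_eq_square)
  finally show ?thesis .
qed

lemma holomorphic3_escape_den:
  "holomorphic3_on (\<lambda>q. fst (F q)) S \<Longrightarrow> holomorphic3_on (\<lambda>q. snd (F q)) S \<Longrightarrow>
    holomorphic3_on (\<lambda>q. escape_den c (F q)) S"
  unfolding escape_den_def
  by (intro holomorphic3_on_diff holomorphic3_on_add holomorphic3_on_mult
      holomorphic3_on_power holomorphic3_on_const)

locale henon_escape =
  fixes c :: complex and R \<rho> \<alpha> :: real
  assumes R: "R > 0" and rho0: "0 < \<rho>" and rho1: "\<rho> < 1" and alpha: "\<alpha> > 0"
    and escape_small: "\<And>y. cmod y \<ge> \<alpha> \<Longrightarrow> cmod c / (cmod y)^2 + (R + 1) / cmod y < \<rho>"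
begin

lemma escape_small_inv:
  assumes "cmod u \<le> 1 / \<alpha>"
  shows "cmod c * (cmod u)^2 + (R + 1) * cmod u < \<rho>"
proof (cases "u = 0")
  case False
  have "cmod (1 / u) \<ge> \<alpha>"
    using assms False alpha by (simp add: norm_divide field_simps)
  then show ?thesis
    using escape_small[of "1 / u"] by (simp add: norm_divide power_divide field_simps)
qed (simp add: rho0)

text \<open>One step of the escape map keeps |u| \<le> 1/alpha and |r| \<le> 1 as long as |a| \<le> R, and
  the denominator stays within rho of 1.  For the second coordinate, |a u| \<le> R|u| \<le> |W|;
  the first coordinate is u times the second.\<close>

lemma escape_step:
  assumes u: "cmod u \<le> 1 / \<alpha>" and r: "cmod r \<le> 1" and a: "cmod a \<le> R"
  shows "cmod (escape_den c (u, r) - 1) < \<rho>"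
    and "cmod (fst (escape_map c a (u, r))) \<le> 1 / \<alpha>" "cmod (snd (escape_map c a (u, r))) \<le> 1"
proof -
  let ?d = "escape_den c (u, r)"
  have small: "cmod c * (cmod u)^2 + R * cmod u + cmod u < \<rho>"
    using escape_small_inv[OF u] by (simp add: algebra_simps)
  have "cmod (?d - 1) = cmod (c * u^2 - u * r)"
    by (simp add: escape_den_def)
  also have "\<dots> \<le> cmod c * (cmod u)^2 + cmod u * cmod r"
    using norm_triangle_ineq4[of "c * u^2" "u * r"] by (simp add: norm_mult norm_power)
  also have "\<dots> \<le> cmod c * (cmod u)^2 + cmod u"
    using mult_left_le[OF r norm_ge_zero[of u]] by simp
  finally have den: "cmod (?d - 1) \<le> cmod c * (cmod u)^2 + cmod u" .
  moreover have "0 \<le> R * cmod u" using R by simp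
  ultimately show "cmod (?d - 1) < \<rho>" using small by linarith
  have "1 \<le> cmod ?d + cmod (?d - 1)"
    using norm_triangle_ineq4[of ?d "?d - 1"] by simp
  then have "cmod (a * u) \<le> cmod ?d"
    using den small rho1 mult_right_mono[OF a norm_ge_zero[of u]] by (simp add: norm_mult)
  then show snd_bound: "cmod (snd (escape_map c a (u, r))) \<le> 1"
    by (cases "?d = 0") (simp_all add: escape_map_def norm_divide)
  have "fst (escape_map c a (u, r)) = u * snd (escape_map c a (u, r))"
    by (simp add: escape_map_def power2_eq_square)
  then show "cmod (fst (escape_map c a (u, r))) \<le> 1 / \<alpha>"
    using mult_left_le[OF snd_bound norm_ge_zero[of u]] u by (simp add: norm_mult)
qed

lemma escape_orbit_bounded:
  assumes "cmod (fst q) \<le> 1 / \<alpha>" "cmod (fst (snd q)) \<le> 1" "cmod (snd (snd q)) \<le> R"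
  shows "cmod (fst (escape_orbit c q k)) \<le> 1 / \<alpha> \<and> cmod (snd (escape_orbit c q k)) \<le> 1"
proof (induction k)
  case 0
  then show ?case using assms by (simp add: escape_orbit_def)
next
  case (Suc k)
  then show ?case
    using escape_step(2,3)[OF _ _ assms(3), of "fst (escape_orbit c q k)" "snd (escape_orbit c q k)"]
    by (simp add: escape_orbit_Suc)
qed

definition escape_box :: "(complex \<times> complex \<times> complex) set" where
  "escape_box = ball 0 (1 / \<alpha>) \<times> ball 0 1 \<times> ball 0 R"

lemma mem_escape_box:
  "q \<in> escape_box \<longleftrightarrow> cmod (fst q) < 1 / \<alpha> \<and> cmod (fst (snd q)) < 1 \<and> cmod (snd (snd q)) < R"
  unfolding escape_box_def by (cases q) auto

lemma escape_den_near_one: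
  assumes "q \<in> escape_box"
  shows "cmod (escape_den c (escape_orbit c q k) - 1) < \<rho>"
  using escape_orbit_bounded[of q k] escape_step(1)[of _ _ 0] assms R
  unfolding mem_escape_box by (metis less_imp_le norm_zero prod.collapse)

lemma escape_den_nonzero: "q \<in> escape_box \<Longrightarrow> escape_den c (escape_orbit c q k) \<noteq> 0"
  using escape_den_near_one[of q k] rho1 by force

lemma holomorphic3_escape_orbit:
  "holomorphic3_on (\<lambda>q. fst (escape_orbit c q k)) escape_box
    \<and> holomorphic3_on (\<lambda>q. snd (escape_orbit c q k)) escape_box"
proof (induction k)
  case 0
  then show ?case by (simp add: escape_orbit_def holomorphic3_on_coordinates)
next
  case (Suc k)
  have den: "holomorphic3_on (\<lambda>q. escape_den c (escape_orbit c q k)) escape_box"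
    using Suc by (intro holomorphic3_escape_den) auto
  have num: "holomorphic3_on (\<lambda>q. snd (snd q) * fst (escape_orbit c q k) ^ j) escape_box" for j
    using Suc by (intro holomorphic3_on_mult holomorphic3_on_power holomorphic3_on_coordinates) auto
  show ?case
    unfolding escape_orbit_Suc escape_map_def fst_conv snd_conv
    using holomorphic3_on_divide[OF num den escape_den_nonzero, of 2]
      holomorphic3_on_divide[OF num den escape_den_nonzero, of 1] by simp
qed

text \<open>The escape series is holomorphic on the box: each term is holomorphic (W has positive
  real part) and bounded by 2^{-k-1} rho/(1-rho).\<close>

lemma holomorphic3_escape_sum: "holomorphic3_on (escape_sum c) escape_box"
proof -
  define d where "d k q = escape_den c (escape_orbit c q k)" for k q
  have d_hol: "holomorphic3_on (d k) escape_box" for k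
    unfolding d_def using holomorphic3_escape_orbit[of k] by (intro holomorphic3_escape_den) auto
  have d_near: "cmod (d k q - 1) < \<rho>" if "q \<in> escape_box" for k q
    unfolding d_def by (rule escape_den_near_one[OF that])
  have Ln_hol: "holomorphic3_on (\<lambda>q. (1/2) ^ Suc k * Ln (d k q)) escape_box" for k
  proof (intro holomorphic3_on_mult holomorphic3_on_const)
    have "d k q \<notin> \<real>\<^sub>\<le>\<^sub>0" if "q \<in> escape_box" for q
      using d_near[OF that, of k] rho1 abs_Re_le_cmod[of "d k q - 1"]
      by (auto simp: complex_nonpos_Reals_iff)
    then show "holomorphic3_on (\<lambda>q. Ln (d k q)) escape_box"
      by (intro holomorphic3_on_compose_field[OF d_hol, where g'="\<lambda>q. inverse (d k q)"]
          has_field_derivative_Ln)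
  qed
  have Ln_bound: "cmod ((1/2) ^ Suc k * Ln (d k q)) \<le> (1/2) ^ Suc k * (\<rho> / (1 - \<rho>))"
    if "q \<in> escape_box" for k q
  proof -
    have "cmod (Ln (d k q)) \<le> cmod (d k q - 1) / (1 - cmod (d k q - 1))"
      using norm_Ln_one_plus_le[of "d k q - 1"] d_near[OF that, of k] rho1 by simp
    also have "\<dots> \<le> \<rho> / (1 - \<rho>)"
      using d_near[OF that, of k] rho0 rho1 by (intro frac_le) auto
    finally have "cmod (Ln (d k q)) \<le> \<rho> / (1 - \<rho>)" .
    then have "(1/2) ^ Suc k * cmod (Ln (d k q)) \<le> (1/2) ^ Suc k * (\<rho> / (1 - \<rho>))"
      by (rule mult_left_mono) simp
    then show ?thesis by (simp add: norm_mult norm_power)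
  qed
  have geometric: "summable (\<lambda>k. (1/2::real) ^ Suc k * (\<rho> / (1 - \<rho>)))"
    by (intro summable_mult2 summable_ignore_initial_segment[where k=1, simplified]) simp
  have "open escape_box" by (simp add: escape_box_def open_Times)
  then have "holomorphic3_on (\<lambda>q. \<Sum>k. (1/2) ^ Suc k * Ln (d k q)) escape_box"
    by (rule holomorphic3_on_suminf[OF _ Ln_hol Ln_bound geometric])
  then show ?thesis unfolding escape_sum_def d_def by (simp add: fun_eq_iff)
qed

end

text \<open>D_{-,n} described by the scaled orbit: for a \<noteq> 0 the conditions |x_{-n}| < |y_{-n}| and
  alpha < |y_{-n}| are multiplied by |a|^sigma_n; for a = 0 they reduce to p(y) \<noteq> x.\<close>

lemma Dminus_eq:
  assumes "R > 0" "\<alpha> > 0" "n \<ge> 1"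
  shows "Dminus c R \<alpha> n = {z. cmod (snd (snd z)) < R
     \<and> cmod (snd (snd z)) ^ (2^(n-1)) * cmod (fst (scaled_orbit c z n)) < cmod (snd (scaled_orbit c z n))
     \<and> \<alpha> * cmod (snd (snd z)) ^ sigma_exp n < cmod (snd (scaled_orbit c z n))}"
proof (rule set_eqI)
  fix z :: "complex \<times> complex \<times> complex"
  obtain x y a where z: "z = (x, y, a)" by (cases z)
  show "z \<in> Dminus c R \<alpha> n \<longleftrightarrow> z \<in> {z. cmod (snd (snd z)) < R
     \<and> cmod (snd (snd z)) ^ (2^(n-1)) * cmod (fst (scaled_orbit c z n)) < cmod (snd (scaled_orbit c z n))
     \<and> \<alpha> * cmod (snd (snd z)) ^ sigma_exp n < cmod (snd (scaled_orbit c z n))}"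
  proof (cases "a = 0")
    case True
    then show ?thesis
      using assms sigma_exp_pos[OF assms(3)]
      by (simp add: z Dminus_def scaled_orbit_at_zero zero_power)
  next
    case False
    obtain X Y where XY: "(henon_inv c a ^^ n) (x, y) = (X, Y)" by fastforce
    have orbit: "scaled_orbit c (x, y, a) n = (a ^ tau_exp n * X, a ^ sigma_exp n * Y)"
      using scaled_orbit_eq[OF False, of c x y n] XY by simp
    have pos: "cmod a ^ sigma_exp n > 0" using False by simp
    have rescale: "cmod a ^ (2^(n-1)) * (cmod a ^ tau_exp n * cmod X) = cmod a ^ sigma_exp n * cmod X"
      using sigma_exp_split[OF assms(3)] by (simp flip: power_add mult.assoc)
    have "z \<in> Dminus c R \<alpha> n \<longleftrightarrow> cmod a < R \<and> cmod a ^ sigma_exp n * cmod X < cmod a ^ sigma_exp n * cmod Y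
        \<and> \<alpha> * cmod a ^ sigma_exp n < cmod a ^ sigma_exp n * cmod Y"
      using False XY pos mem_henon_image_iff[OF False]
      by (auto simp: z Dminus_def Vminus_def mult.commute)
    then show ?thesis
      unfolding z mem_Collect_eq fst_conv snd_conv orbit norm_mult norm_power rescale by simp
  qed
qed

text \<open>Hence D_{-,n} is open, being defined by strict inequalities between continuous functions.\<close>

lemma open_Dminus:
  assumes "R > 0" "\<alpha> > 0" "n \<ge> 1"
  shows "open (Dminus c R \<alpha> n)"
proof -
  have "continuous_on UNIV (\<lambda>z. fst (scaled_orbit c z n))" "continuous_on UNIV (\<lambda>z. snd (scaled_orbit c z n))"
    using holomorphic3_scaled_orbit[of c n UNIV] holomorphic3_on_imp_isCont
    by (auto intro!: continuous_at_imp_continuous_on)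
  moreover from this have "continuous_on UNIV (\<lambda>z. scaled_orbit c z n)"
    using continuous_on_Pair by fastforce
  ultimately show ?thesis
    unfolding Dminus_eq[OF assms]
    by (intro open_Collect_conj open_Collect_less continuous_intros) auto
qed

definition escape_coords :: "complex \<Rightarrow> nat \<Rightarrow> complex \<times> complex \<times> complex \<Rightarrow> complex \<times> complex \<times> complex" where
  "escape_coords c n z =
     (snd (snd z) ^ sigma_exp n / snd (scaled_orbit c z n),
      snd (snd z) ^ (2^(n-1)) * fst (scaled_orbit c z n) / snd (scaled_orbit c z n),
      snd (snd z))"

definition Phi :: "complex \<Rightarrow> nat \<Rightarrow> complex \<times> complex \<times> complex \<Rightarrow> complex" where
  "Phi c n z = snd (scaled_orbit c z n) * exp (escape_sum c (escape_coords c n z))"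

text \<open>At a = 0 the escape coordinates vanish, so Phi_n reduces to Q = (p(y) - x)^(2^(n-1)).\<close>

lemma Phi_at_zero:
  assumes "n \<ge> 1"
  shows "Phi c n (x, y, 0) = (pq c y - x) ^ (2^(n-1))"
proof -
  have "escape_coords c n (x, y, 0) = (0, 0, 0)"
    using sigma_exp_pos[OF assms] by (simp add: escape_coords_def zero_power)
  moreover have "escape_sum c (0, 0, 0) = 0"
    by (simp add: escape_sum_def escape_orbit_origin escape_den_def)
  ultimately show ?thesis unfolding Phi_def using scaled_orbit_at_zero[OF assms] by simp
qed

context henon_escape
begin

text \<open>On D_{-,n} the escape coordinates lie in the box and Q \<noteq> 0, so Phi_n is holomorphic there.\<close>

lemma holomorphic3_Phi:
  assumes n: "n \<ge> 1"
  shows "holomorphic3_on (Phi c n) (Dminus c R \<alpha> n)"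
proof -
  let ?P = "\<lambda>z. fst (scaled_orbit c z n)" and ?Q = "\<lambda>z. snd (scaled_orbit c z n)"
  define D where "D = {z. ?Q z \<noteq> 0 \<and> escape_coords c n z \<in> escape_box}"
  note orbit_hol = holomorphic3_scaled_orbit[of c n D]
  have "holomorphic3_on (\<lambda>z. escape_sum c (escape_coords c n z)) D"
    unfolding escape_coords_def
    by (rule holomorphic3_on_compose3[OF holomorphic3_escape_sum])
      (use orbit_hol in \<open>auto simp: D_def escape_coords_def
        intro!: holomorphic3_on_divide holomorphic3_on_mult holomorphic3_on_power holomorphic3_on_coordinates\<close>)
  then have "holomorphic3_on (Phi c n) D"
    unfolding Phi_def using orbit_hol by (intro holomorphic3_on_mult holomorphic3_on_exp) auto
  moreover have "Dminus c R \<alpha> n \<subseteq> D"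
  proof
    fix z assume "z \<in> Dminus c R \<alpha> n"
    then have z: "cmod (snd (snd z)) < R"
        "cmod (snd (snd z)) ^ (2^(n-1)) * cmod (?P z) < cmod (?Q z)"
        "\<alpha> * cmod (snd (snd z)) ^ sigma_exp n < cmod (?Q z)"
      unfolding Dminus_eq[OF R alpha n] by auto
    moreover have "cmod (?Q z) > 0"
      using z(3) alpha by (smt (verit) mult_nonneg_nonneg norm_ge_zero zero_le_power)
    ultimately show "z \<in> D"
      using alpha by (simp add: D_def mem_escape_box escape_coords_def norm_divide norm_mult norm_power field_simps)
  qed
  ultimately show ?thesis by (rule holomorphic3_on_subset)
qed

end

text \<open>Adding the growth hypothesis on p, which makes V_- backward invariant.\<close>

locale henon_filtration = henon_escape +
  assumes escape_large: "\<And>y. cmod y \<ge> \<alpha> \<Longrightarrow> cmod (pq c y) > (2 * R + 1) * cmod y"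
begin

text \<open>V_- is mapped into itself by f_a^{-1}, since |y_{-1}| > 2|y| there.\<close>

lemma Vminus_backward_invariant:
  assumes w: "w \<in> Vminus \<alpha>" and a: "a \<noteq> 0" "cmod a < R"
  shows "henon_inv c a w \<in> Vminus \<alpha>"
proof -
  obtain X Y where XY: "w = (X, Y)" by fastforce
  have V: "cmod Y > cmod X" "cmod Y > \<alpha>" using w XY unfolding Vminus_def by auto
  have "cmod (pq c Y - X) \<ge> cmod (pq c Y) - cmod X" by (rule norm_triangle_ineq2)
  then have "cmod (pq c Y - X) > 2 * R * cmod Y"
    using escape_large[of Y] V by (simp add: algebra_simps)
  moreover have "2 * R * cmod Y \<ge> 2 * cmod a * cmod Y" using a(2) by (simp add: mult_right_mono)
  ultimately have "cmod ((pq c Y - X) / a) > 2 * cmod Y" using a(1) by (simp add: norm_divide field_simps)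
  then show ?thesis using V alpha unfolding XY henon_inv_def Vminus_def by auto
qed

lemma Vminus_backward_orbit:
  "w \<in> Vminus \<alpha> \<Longrightarrow> a \<noteq> 0 \<Longrightarrow> cmod a < R \<Longrightarrow> (henon_inv c a ^^ k) w \<in> Vminus \<alpha>"
  by (induction k) (auto intro: Vminus_backward_invariant)

lemma escape_orbit_backward:
  assumes w: "w \<in> Vminus \<alpha>" and a: "a \<noteq> 0" "cmod a < R"
  shows "escape_orbit c (1 / snd w, fst w / snd w, a) k
     = (1 / snd ((henon_inv c a ^^ k) w), fst ((henon_inv c a ^^ k) w) / snd ((henon_inv c a ^^ k) w))"
proof (induction k)
  case 0
  then show ?case by (simp add: escape_orbit_def)
next
  case (Suc k)
  obtain X Y where XY: "(henon_inv c a ^^ k) w = (X, Y)" by fastforce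
  define Y' where "Y' = (pq c Y - X) / a"
  have "(X, Y) \<in> Vminus \<alpha>" "(Y, Y') \<in> Vminus \<alpha>"
    using Vminus_backward_orbit[OF w a, of k] Vminus_backward_orbit[OF w a, of "Suc k"] XY
    by (simp_all add: Y'_def henon_inv_def)
  then have Y0: "Y \<noteq> 0" "Y' \<noteq> 0" using alpha unfolding Vminus_def by auto
  have den: "escape_den c (1/Y, X/Y) = a * Y' / Y^2"
    using a Y0 unfolding escape_den_def Y'_def pq_def by (simp add: field_simps power2_eq_square)
  have "escape_map c a (1/Y, X/Y) = (1/Y', Y/Y')"
    using a Y0 by (simp add: escape_map_def den field_simps power2_eq_square)
  moreover have "(henon_inv c a ^^ Suc k) w = (Y, Y')"
    using XY by (simp add: henon_inv_def Y'_def)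
  ultimately show ?case using Suc XY by (simp add: escape_orbit_Suc)
qed

lemma Phi_eq_phi_minus:
  assumes n: "n \<ge> 1" and a: "0 < cmod a" "cmod a < R" and xy: "(x, y) \<in> (henon c a ^^ n) ` Vminus \<alpha>"
  shows "Phi c n (x, y, a) = a ^ (\<Sum>k<n. 2^k) * phi_minus c a ((henon_inv c a ^^ n) (x, y))"
proof -
  have a0: "a \<noteq> 0" using a by auto
  define w where "w = (henon_inv c a ^^ n) (x, y)"
  have w: "w \<in> Vminus \<alpha>" using mem_henon_image_iff[OF a0] xy unfolding w_def by blast
  obtain X Y where XY: "w = (X, Y)" by fastforce
  have Y0: "Y \<noteq> 0" using w XY alpha unfolding Vminus_def by auto
  have orbit: "scaled_orbit c (x, y, a) n = (a ^ tau_exp n * X, a ^ sigma_exp n * Y)"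
    using scaled_orbit_eq[OF a0, of c x y n] XY w_def by simp
  have coords: "escape_coords c n (x, y, a) = (1 / Y, X / Y, a)"
    using a0 Y0 sigma_exp_split[OF n]
    by (simp add: escape_coords_def orbit flip: power_add mult.assoc)
  have "escape_sum c (1 / Y, X / Y, a)
      = (\<Sum>k. (1/2) ^ Suc k * Ln (a * yback c a w (Suc k) / (yback c a w k)^2))"
    unfolding escape_sum_def
  proof (rule suminf_cong)
    fix k
    obtain Xk Yk where XYk: "(henon_inv c a ^^ k) w = (Xk, Yk)" by fastforce
    have "Yk \<noteq> 0"
      using Vminus_backward_orbit[OF w a0 a(2), of k] XYk alpha unfolding Vminus_def by auto
    then have "escape_den c (1/Yk, Xk/Yk) = a * ((pq c Yk - Xk) / a) / Yk^2"
      using a0 unfolding escape_den_def pq_def by (simp add: field_simps power2_eq_square)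
    moreover have "escape_orbit c (1/Y, X/Y, a) k = (1/Yk, Xk/Yk)"
      using escape_orbit_backward[OF w a0 a(2), of k] XY XYk by simp
    ultimately show "(1/2) ^ Suc k * Ln (escape_den c (escape_orbit c (1/Y, X/Y, a) k))
        = (1/2) ^ Suc k * Ln (a * yback c a w (Suc k) / (yback c a w k)^2)"
      using XYk by (simp add: yback_def henon_inv_def)
  qed
  then show ?thesis
    unfolding Phi_def coords w_def[symmetric] using orbit XY
    by (simp add: phi_minus_def sigma_exp_def)
qed

end

theorem lemma4p10:
  fixes c :: complex and R \<rho> \<alpha> :: real and n :: nat
  assumes "R > 0" and "0 < \<rho>" and "\<rho> < 1" and "\<alpha> > 0"
    and "\<And>y. cmod y \<ge> \<alpha> \<Longrightarrow> cmod c / (cmod y)^2 + (R + 1) / cmod y < \<rho>"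
    and "\<And>y. cmod y \<ge> \<alpha> \<Longrightarrow> cmod (pq c y) > (2 * R + 1) * cmod y"
    and "n \<ge> 1"
  shows "open (Dminus c R \<alpha> n) \<and>
    (\<exists>\<Phi>. holomorphic3_on \<Phi> (Dminus c R \<alpha> n)
       \<and> (\<forall>x y a. 0 < cmod a \<and> cmod a < R \<and> (x,y) \<in> (henon c a ^^ n) ` Vminus \<alpha> \<longrightarrow>
             \<Phi> (x,y,a) = a ^ (\<Sum>k<n. 2^k) * phi_minus c a ((henon_inv c a ^^ n) (x,y)))
       \<and> (\<forall>x y. pq c y \<noteq> x \<longrightarrow> \<Phi> (x,y,0) = (pq c y - x) ^ (2^(n-1))))"
proof -
  interpret henon_filtration c R \<rho> \<alpha>
    using assms(1-6) by unfold_locales auto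
  have "holomorphic3_on (Phi c n) (Dminus c R \<alpha> n)"
    by (rule holomorphic3_Phi[OF assms(7)])
  moreover have "\<forall>x y a. 0 < cmod a \<and> cmod a < R \<and> (x,y) \<in> (henon c a ^^ n) ` Vminus \<alpha> \<longrightarrow>
      Phi c n (x,y,a) = a ^ (\<Sum>k<n. 2^k) * phi_minus c a ((henon_inv c a ^^ n) (x,y))"
    using Phi_eq_phi_minus[OF assms(7)] by blast
  moreover have "\<forall>x y. Phi c n (x,y,0) = (pq c y - x) ^ (2^(n-1))"
    using Phi_at_zero[OF assms(7)] by blast
  ultimately show ?thesis
    using open_Dminus[OF assms(1,4,7)] by blast
qed

end
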